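(* Let $A$ and $B$ be finite sets of integers with $A\neq\{0\}$ and $B\neq\{0\}$, such that $A\oplus B$ is a complete set of residues modulo $(\#A)(\#B)$. Then at least one of the following holds: (1) no member of $A-A$ is relatively prime to $\#B$; (2) no member of $B-B$ is relatively prime to $\#A$.
   Context: $A-A=\{a_1-a_2:a_1,a_2\in A\}$. $A\oplus B$ denotes the collection $\{a+b\}$ where each element arises uniquely; being a complete set of residues modulo $n$ means the $a+b$ represent each residue class mod $n$ exactly once. *)

theory Defs
  imports Main
begin

definition diffset :: "int set \<Rightarrow> int set" where
  "diffset A = {a1 - a2 | a1 a2. a1 \<in> A \<and> a2 \<in> A}"

definition direct_sum_complete_residues :: "int set \<Rightarrow> int set \<Rightarrow> int \<Rightarrow> bool" where
  "direct_sum_complete_residues A B n \<longleftrightarrow>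
     bij_betw (\<lambda>(a, b). (a + b) mod n) (A \<times> B) {0..<n}"

end

theory Submission
  imports Defs "HOL-Computational_Algebra.Polynomial" "HOL-Number_Theory.Cong"
begin

(*
  The heart of the matter is a multiplier theorem: if (f a + g b) mod n, for (a, b) in A x B,
  runs through every residue modulo n = |A| |B| exactly once, and p is a prime not dividing |A|,
  then so does (p f a + g b) mod n. By the freshman's dream, (sum_a x^(f a))^p and
  sum_a x^(p f a) agree coefficientwise modulo p, so the number of pairs with
  p f a + g b = r (mod n) is congruent modulo p to the number of tuples (a_1, ..., a_p, b) with
  f a_1 + ... + f a_p + g b = r (mod n). Since a_1 and b are determined by the other entries,
  the latter number is |A|^(p-1), which is prime to p. Hence every residue is attained, and
  counting gives bijectivity. Factoring into primes, A + B may be replaced by sA + tB for any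
  s coprime to |A| and t coprime to |B|.

  If a1 - a2 is coprime to |B| and b1 - b2 is coprime to |A| (both positive after swapping),
  take s = b1 - b2 and t = a1 - a2: then s a1 + t b2 = s a2 + t b1 contradicts injectivity.
*)

lemma freshmans_dream_dvd:
  fixes x y :: "'a::comm_ring_1"
  assumes "prime p"
  shows "of_nat p dvd (x + y) ^ p - (x ^ p + y ^ p)"
proof -
  define S where "S = (\<Sum>k\<in>{1..p-1}. of_nat (p choose k) * x ^ k * y ^ (p - k))"
  have "p > 0"
    using assms prime_gt_0_nat by blast
  have "(x + y) ^ p = (\<Sum>k\<in>insert p (insert 0 {1..p-1}). of_nat (p choose k) * x ^ k * y ^ (p - k))"
    unfolding binomial_ring by (rule sum.cong) auto
  also have "\<dots> = x ^ p + (y ^ p + S)"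
    using \<open>p > 0\<close> by (simp add: S_def sum.insert)
  finally have "(x + y) ^ p - (x ^ p + y ^ p) = S"
    by (simp only: add.assoc[symmetric] add_diff_cancel_left')
  moreover have "of_nat p dvd S"
    unfolding S_def
  proof (intro dvd_sum dvd_mult2)
    fix k assume "k \<in> {1..p-1}"
    then have "p dvd (p choose k)"
      using assms by (intro dvd_choose_prime) auto
    then show "of_nat p dvd (of_nat (p choose k) :: 'a)"
      by (elim dvdE) simp
  qed
  ultimately show ?thesis
    by simp
qed

lemma freshmans_dream_sum_dvd:
  fixes u :: "'b \<Rightarrow> 'a::comm_ring_1"
  assumes "prime p"
  shows "of_nat p dvd (\<Sum>a\<in>A. u a) ^ p - (\<Sum>a\<in>A. u a ^ p)"
proof (induction A rule: infinite_finite_induct)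
  case (insert a A)
  have "(\<Sum>x\<in>insert a A. u x) ^ p - (\<Sum>x\<in>insert a A. u x ^ p)
      = ((u a + (\<Sum>x\<in>A. u x)) ^ p - (u a ^ p + (\<Sum>x\<in>A. u x) ^ p))
        + ((\<Sum>x\<in>A. u x) ^ p - (\<Sum>x\<in>A. u x ^ p))"
    using insert.hyps by (simp add: algebra_simps)
  also have "of_nat p dvd \<dots>"
    using insert.IH freshmans_dream_dvd[OF assms] by (rule dvd_add[rotated])
  finally show ?case .
qed (use assms prime_gt_0_nat in \<open>simp_all add: zero_power\<close>)

definition tuples :: "'a set \<Rightarrow> nat \<Rightarrow> 'a list set" where
  "tuples A m = {xs. set xs \<subseteq> A \<and> length xs = m}"

lemma finite_tuples: "finite A \<Longrightarrow> finite (tuples A m)"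
  unfolding tuples_def by (rule finite_lists_length_eq)

lemma card_tuples: "finite A \<Longrightarrow> card (tuples A m) = card A ^ m"
  unfolding tuples_def by (rule card_lists_length_eq)

lemma tuples_0 [simp]: "tuples A 0 = {[]}"
  by (auto simp: tuples_def)

lemma sum_tuples_Suc:
  "(\<Sum>xs\<in>tuples A (Suc m). F xs) = (\<Sum>a\<in>A. \<Sum>xs\<in>tuples A m. F (a # xs))"
proof -
  have "inj_on (\<lambda>(xs, a). a # xs) (tuples A m \<times> A)"
    by (auto simp: inj_on_def)
  then have "(\<Sum>xs\<in>tuples A (Suc m). F xs) = (\<Sum>(xs, a)\<in>tuples A m \<times> A. F (a # xs))"
    unfolding tuples_def lists_length_Suc_eq by (simp add: sum.reindex case_prod_unfold)
  also have "\<dots> = (\<Sum>xs\<in>tuples A m. \<Sum>a\<in>A. F (a # xs))"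
    by (rule sum.cartesian_product[symmetric])
  also have "\<dots> = (\<Sum>a\<in>A. \<Sum>xs\<in>tuples A m. F (a # xs))"
    by (rule sum.swap)
  finally show ?thesis .
qed

lemma power_sum_eq_sum_tuples:
  fixes u :: "'b \<Rightarrow> 'a::comm_semiring_1"
  shows "(\<Sum>a\<in>A. u a) ^ m = (\<Sum>xs\<in>tuples A m. prod_list (map u xs))"
proof (induction m)
  case (Suc m)
  have "(\<Sum>a\<in>A. u a) ^ Suc m = (\<Sum>a\<in>A. u a) * (\<Sum>xs\<in>tuples A m. prod_list (map u xs))"
    using Suc by simp
  also have "\<dots> = (\<Sum>a\<in>A. \<Sum>xs\<in>tuples A m. prod_list (map u (a # xs)))"
    by (simp add: sum_distrib_left sum_distrib_right sum.swap[of _ A])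
  also have "\<dots> = (\<Sum>xs\<in>tuples A (Suc m). prod_list (map u xs))"
    by (rule sum_tuples_Suc[symmetric])
  finally show ?case .
qed simp

lemma coeff_sum_monom_one:
  assumes "finite S"
  shows "coeff (\<Sum>s\<in>S. monom 1 (\<phi> s)) j = (of_nat (card {s\<in>S. \<phi> s = j}) :: 'a::comm_semiring_1)"
  using assms by (simp add: coeff_sum of_bool_def[symmetric] Int_def)

lemma cong_card_tuples_sum_prime:
  fixes h :: "'a \<Rightarrow> nat"
  assumes "prime p" and "finite A"
  shows "[card {xs\<in>tuples A p. sum_list (map h xs) = j} = card {a\<in>A. p * h a = j}] (mod p)"
proof -
  have "(\<Sum>a\<in>A. monom 1 (h a)) ^ p = (\<Sum>xs\<in>tuples A p. monom (1::int) (sum_list (map h xs)))"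
  proof -
    have "prod_list (map (\<lambda>a. monom (1::int) (h a)) xs) = monom 1 (sum_list (map h xs))" for xs
      by (induction xs) (simp_all add: mult_monom)
    then show ?thesis
      by (simp add: power_sum_eq_sum_tuples)
  qed
  moreover have "(\<Sum>a\<in>A. monom 1 (h a) ^ p) = (\<Sum>a\<in>A. monom (1::int) (p * h a))"
    by (simp add: monom_power mult.commute)
  ultimately have "of_nat p dvd (\<Sum>xs\<in>tuples A p. monom 1 (sum_list (map h xs))) - (\<Sum>a\<in>A. monom (1::int) (p * h a))"
    using freshmans_dream_sum_dvd[OF assms(1), of "\<lambda>a. monom (1::int) (h a)" A] by (simp only:)
  then obtain W where
    W: "(\<Sum>xs\<in>tuples A p. monom 1 (sum_list (map h xs))) - (\<Sum>a\<in>A. monom (1::int) (p * h a)) = of_nat p * W"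
    by (rule dvdE)
  have "int (card {xs\<in>tuples A p. sum_list (map h xs) = j}) - int (card {a\<in>A. p * h a = j})
      = int p * coeff W j"
    using arg_cong[OF W, of "\<lambda>P. coeff P j"]
    by (simp add: coeff_sum_monom_one finite_tuples assms(2) of_nat_monom coeff_monom_mult)
  then show ?thesis
    by (simp add: cong_iff_dvd_diff flip: cong_int_iff)
qed

lemma card_filter_eq_sum_card_fibers:
  assumes "finite X" and "finite J"
    and "\<And>x. x \<in> X \<Longrightarrow> Q (\<phi> x) \<Longrightarrow> \<phi> x \<in> J" and "\<And>j. j \<in> J \<Longrightarrow> Q j"
  shows "card {x\<in>X. Q (\<phi> x)} = (\<Sum>j\<in>J. card {x\<in>X. \<phi> x = j})"
proof -
  have "card {x\<in>X. Q (\<phi> x)} = (\<Sum>j\<in>J. card {x. x \<in> {x\<in>X. Q (\<phi> x)} \<and> \<phi> x = j})"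
    unfolding card_eq_sum
    by (rule sum.group[where g = \<phi>, symmetric]) (use assms in auto)
  also have "\<dots> = (\<Sum>j\<in>J. card {x\<in>X. \<phi> x = j})"
    using assms(4) by (intro sum.cong refl arg_cong[where f = card]) auto
  finally show ?thesis .
qed

lemma cong_card_filter_if_cong_card_fibers:
  assumes "finite S" and "finite T"
    and "\<And>j. [card {x\<in>S. \<phi> x = j} = card {y\<in>T. \<psi> y = j}] (mod m)"
  shows "[card {x\<in>S. Q (\<phi> x)} = card {y\<in>T. Q (\<psi> y)}] (mod m)"
proof -
  define J where "J = {j \<in> \<phi> ` S \<union> \<psi> ` T. Q j}"
  have "finite J"
    using assms(1,2) by (simp add: J_def)
  have "card {x\<in>S. Q (\<phi> x)} = (\<Sum>j\<in>J. card {x\<in>S. \<phi> x = j})"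
    using assms(1) \<open>finite J\<close> by (intro card_filter_eq_sum_card_fibers) (auto simp: J_def)
  also have "[\<dots> = (\<Sum>j\<in>J. card {y\<in>T. \<psi> y = j})] (mod m)"
    using assms(3) by (rule cong_sum)
  also have "(\<Sum>j\<in>J. card {y\<in>T. \<psi> y = j}) = card {y\<in>T. Q (\<psi> y)}"
    using assms(2) \<open>finite J\<close> by (intro card_filter_eq_sum_card_fibers[symmetric]) (auto simp: J_def)
  finally show ?thesis .
qed

lemma bij_betw_card_fiber:
  assumes "bij_betw F X Y" and "y \<in> Y"
  shows "card {x\<in>X. F x = y} = 1"
proof -
  obtain x where "x \<in> X" "F x = y"
    using assms by (auto simp: bij_betw_def)
  then have "{x\<in>X. F x = y} = {x}"
    using assms(1) by (auto simp: bij_betw_def inj_on_def)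
  then show ?thesis
    by simp
qed

lemma bij_betw_swap_product:
  assumes "bij_betw (\<lambda>(a, b). F a b) (A \<times> B) Y"
  shows "bij_betw (\<lambda>(b, a). F a b) (B \<times> A) Y"
proof -
  have "bij_betw prod.swap (B \<times> A) (A \<times> B)"
    by (auto simp: bij_betw_def inj_on_def product_swap)
  from bij_betw_trans[OF this assms] show ?thesis
    by (simp add: comp_def case_prod_unfold)
qed

lemma card_product_filter_eq_sum:
  assumes "finite A" and "finite B"
  shows "card {(a, b)\<in>A \<times> B. P a b} = (\<Sum>b\<in>B. card {a\<in>A. P a b})"
proof -
  have "card {(a, b)\<in>A \<times> B. P a b} = (\<Sum>(a, b)\<in>A \<times> B. of_bool (P a b))"
    using assms by (simp add: Int_def case_prod_unfold mem_Times_iff)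
  also have "\<dots> = (\<Sum>b\<in>B. \<Sum>a\<in>A. of_bool (P a b))"
    by (simp add: sum.cartesian_product[symmetric] sum.swap[of _ A])
  also have "\<dots> = (\<Sum>b\<in>B. card {a\<in>A. P a b})"
    using assms by (simp add: Int_def)
  finally show ?thesis .
qed

lemma complete_residues_card_fiber_shift:
  fixes f :: "'a \<Rightarrow> int" and g :: "'b \<Rightarrow> int"
  assumes bij: "bij_betw (\<lambda>(a, b). (f a + g b) mod n) (A \<times> B) {0..<n}"
    and "0 \<le> r" and "r < n"
  shows "card {(a, b)\<in>A \<times> B. (f a + c + g b) mod n = r} = 1"
proof -
  have "(f a + c + g b) mod n = r \<longleftrightarrow> (f a + g b) mod n = (r - c) mod n" for a b
  proof -
    have "(f a + c + g b) mod n = r \<longleftrightarrow> (f a + c + g b) mod n = r mod n"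
      using \<open>0 \<le> r\<close> \<open>r < n\<close> by simp
    also have "\<dots> \<longleftrightarrow> (f a + g b) mod n = (r - c) mod n"
      by (simp add: mod_eq_dvd_iff algebra_simps)
    finally show ?thesis .
  qed
  then have "{(a, b)\<in>A \<times> B. (f a + c + g b) mod n = r}
      = {z\<in>A \<times> B. (\<lambda>(a, b). (f a + g b) mod n) z = (r - c) mod n}"
    by auto
  moreover have "(r - c) mod n \<in> {0..<n}"
    using \<open>0 \<le> r\<close> \<open>r < n\<close> by simp
  ultimately show ?thesis
    using bij_betw_card_fiber[OF bij] by simp
qed

lemma sum_card_tuples_residue:
  fixes f :: "'a \<Rightarrow> int" and g :: "'b \<Rightarrow> int"
  assumes "finite A" and "finite B"
    and bij: "bij_betw (\<lambda>(a, b). (f a + g b) mod n) (A \<times> B) {0..<n}"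
    and "0 \<le> r" and "r < n"
  shows "(\<Sum>b\<in>B. card {xs\<in>tuples A (Suc m). (sum_list (map f xs) + g b) mod n = r}) = card A ^ m"
proof -
  define P where "P ys a b \<longleftrightarrow> (f a + sum_list (map f ys) + g b) mod n = r" for ys a b
  have "(\<Sum>b\<in>B. card {xs\<in>tuples A (Suc m). (sum_list (map f xs) + g b) mod n = r})
      = (\<Sum>b\<in>B. \<Sum>xs\<in>tuples A (Suc m). of_bool ((sum_list (map f xs) + g b) mod n = r))"
    using finite_tuples[OF assms(1)] by (simp add: Int_def)
  also have "\<dots> = (\<Sum>b\<in>B. \<Sum>a\<in>A. \<Sum>ys\<in>tuples A m. of_bool (P ys a b))"
    by (simp only: P_def sum_tuples_Suc list.map sum_list.Cons)
  also have "\<dots> = (\<Sum>b\<in>B. \<Sum>ys\<in>tuples A m. \<Sum>a\<in>A. of_bool (P ys a b))"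
    by (intro sum.cong refl sum.swap)
  also have "\<dots> = (\<Sum>ys\<in>tuples A m. \<Sum>b\<in>B. \<Sum>a\<in>A. of_bool (P ys a b))"
    by (rule sum.swap)
  also have "\<dots> = (\<Sum>ys\<in>tuples A m. \<Sum>b\<in>B. card {a\<in>A. P ys a b})"
    using assms(1) by (simp add: Int_def)
  also have "\<dots> = (\<Sum>ys\<in>tuples A m. card {(a, b)\<in>A \<times> B. P ys a b})"
    by (simp only: card_product_filter_eq_sum[OF assms(1,2)])
  also have "\<dots> = card A ^ m"
    using complete_residues_card_fiber_shift[OF bij \<open>0 \<le> r\<close> \<open>r < n\<close>]
    by (simp only: P_def) (simp add: card_tuples assms(1))
  finally show ?thesis .
qed

lemma cong_card_fiber_mult_prime:
  fixes h :: "'a \<Rightarrow> nat" and g :: "'b \<Rightarrow> int"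
  assumes "finite A" and "finite B"
    and bij: "bij_betw (\<lambda>(a, b). (int (h a) + g b) mod n) (A \<times> B) {0..<n}"
    and "prime p" and "0 \<le> r" and "r < n"
  shows "[card {(a, b)\<in>A \<times> B. (int (p * h a) + g b) mod n = r} = card A ^ (p - 1)] (mod p)"
proof -
  define Q where "Q b j \<longleftrightarrow> (int j + g b) mod n = r" for b j
  have "card {(a, b)\<in>A \<times> B. (int (p * h a) + g b) mod n = r} = (\<Sum>b\<in>B. card {a\<in>A. Q b (p * h a)})"
    unfolding Q_def by (rule card_product_filter_eq_sum[OF assms(1,2)])
  also have "[\<dots> = (\<Sum>b\<in>B. card {xs\<in>tuples A p. Q b (sum_list (map h xs))})] (mod p)"
  proof (rule cong_sum, rule cong_sym)
    fix b
    show "[card {xs\<in>tuples A p. Q b (sum_list (map h xs))} = card {a\<in>A. Q b (p * h a)}] (mod p)"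
      using cong_card_tuples_sum_prime[OF \<open>prime p\<close> assms(1)]
      by (rule cong_card_filter_if_cong_card_fibers[OF finite_tuples[OF assms(1)] assms(1),
            where \<phi> = "\<lambda>xs. sum_list (map h xs)" and \<psi> = "\<lambda>a. p * h a"])
  qed
  also have "(\<Sum>b\<in>B. card {xs\<in>tuples A p. Q b (sum_list (map h xs))}) = card A ^ (p - 1)"
  proof -
    have "int (sum_list (map h xs)) = sum_list (map (\<lambda>a. int (h a)) xs)" for xs
      by (induction xs) simp_all
    moreover have "Suc (p - 1) = p"
      using prime_gt_0_nat[OF \<open>prime p\<close>] by simp
    ultimately show ?thesis
      using sum_card_tuples_residue[OF assms(1,2) bij \<open>0 \<le> r\<close> \<open>r < n\<close>, of "p - 1"]
      by (simp add: Q_def)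
  qed
  finally show ?thesis .
qed

lemma complete_residues_mult_prime:
  fixes f :: "'a \<Rightarrow> int" and g :: "'b \<Rightarrow> int"
  assumes "finite A" and "finite B" and n: "n = int (card A * card B)"
    and bij: "bij_betw (\<lambda>(a, b). (f a + g b) mod n) (A \<times> B) {0..<n}"
    and "prime p" and "\<not> p dvd card A"
  shows "bij_betw (\<lambda>(a, b). (int p * f a + g b) mod n) (A \<times> B) {0..<n}"
proof (cases "n = 0")
  case True
  then have "A \<times> B = {}"
    using bij by (auto simp: bij_betw_def)
  then show ?thesis
    unfolding \<open>A \<times> B = {}\<close> using True by (simp add: bij_betw_def)
next
  case False
  then have "n > 0"
    using n by simp
  \<comment> \<open>Reduce \<open>f\<close> mod \<open>n\<close> so that its values can serve as exponents of monomials.\<close>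
  define h where "h a = nat (f a mod n)" for a
  have h: "int (h a) = f a mod n" for a
    unfolding h_def using \<open>n > 0\<close> by simp
  have bij_h: "bij_betw (\<lambda>(a, b). (int (h a) + g b) mod n) (A \<times> B) {0..<n}"
    using bij by (simp add: h mod_add_left_eq case_prod_unfold)
  have scaled: "(int p * f a + g b) mod n = (int (p * h a) + g b) mod n" for a b
    unfolding cong_def[symmetric] of_nat_mult
    by (intro cong_add cong_scalar_left cong_refl) (simp add: h cong_def)
  have "r \<in> (\<lambda>(a, b). (int p * f a + g b) mod n) ` (A \<times> B)" if r: "r \<in> {0..<n}" for r
  proof -
    have "[card {(a, b)\<in>A \<times> B. (int p * f a + g b) mod n = r} = card A ^ (p - 1)] (mod p)"
      unfolding scaled using r by (intro cong_card_fiber_mult_prime[OF assms(1,2) bij_h \<open>prime p\<close>]) auto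
    moreover have "\<not> p dvd card A ^ (p - 1)"
      using \<open>prime p\<close> \<open>\<not> p dvd card A\<close> prime_dvd_power by blast
    ultimately have "card {(a, b)\<in>A \<times> B. (int p * f a + g b) mod n = r} \<noteq> 0"
      by (metis cong_0_iff cong_sym)
    then have "{(a, b)\<in>A \<times> B. (int p * f a + g b) mod n = r} \<noteq> {}"
      by (metis card.empty)
    then show ?thesis
      by (auto simp: image_iff)
  qed
  then have "(\<lambda>(a, b). (int p * f a + g b) mod n) ` (A \<times> B) = {0..<n}"
    using \<open>n > 0\<close> by fastforce
  moreover have "card (A \<times> B) = card {0..<n}"
    using n by (simp add: card_cartesian_product flip: of_nat_mult)
  ultimately show ?thesis
    using assms(1,2) by (simp add: bij_betw_def eq_card_imp_inj_on)
qed

lemma complete_residues_mult_coprime: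
  fixes f :: "'a \<Rightarrow> int" and g :: "'b \<Rightarrow> int"
  assumes "finite A" and "finite B" and "n = int (card A * card B)"
    and bij: "bij_betw (\<lambda>(a, b). (f a + g b) mod n) (A \<times> B) {0..<n}"
    and "s > 0" and "coprime s (card A)"
  shows "bij_betw (\<lambda>(a, b). (int s * f a + g b) mod n) (A \<times> B) {0..<n}"
  using \<open>s > 0\<close> \<open>coprime s (card A)\<close>
proof (induction s rule: prime_divisors_induct)
  case (unit s)
  then show ?case
    using bij by simp
next
  case (factor p s)
  have "\<not> p dvd card A"
    using factor.prems(2) \<open>prime p\<close> coprime_common_divisor[of p "card A" p] not_prime_unit
    by auto
  moreover have "bij_betw (\<lambda>(a, b). (int s * f a + g b) mod n) (A \<times> B) {0..<n}"
    using factor.prems by (intro factor.IH) auto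
  ultimately show ?case
    using complete_residues_mult_prime[OF assms(1-3) _ \<open>prime p\<close>, of "\<lambda>a. int s * f a" g]
    by (simp add: mult.assoc)
qed simp

lemma complete_residues_mult_coprime_both:
  fixes f :: "'a \<Rightarrow> int" and g :: "'b \<Rightarrow> int"
  assumes "finite A" and "finite B" and n: "n = int (card A * card B)"
    and bij: "bij_betw (\<lambda>(a, b). (f a + g b) mod n) (A \<times> B) {0..<n}"
    and "s > 0" and "coprime s (card A)" and "t > 0" and "coprime t (card B)"
  shows "bij_betw (\<lambda>(a, b). (int s * f a + int t * g b) mod n) (A \<times> B) {0..<n}"
proof -
  have "bij_betw (\<lambda>(a, b). (int s * f a + g b) mod n) (A \<times> B) {0..<n}"
    using complete_residues_mult_coprime assms by blast
  then have "bij_betw (\<lambda>(b, a). (g b + int s * f a) mod n) (B \<times> A) {0..<n}"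
    by (subst add.commute) (rule bij_betw_swap_product)
  moreover have "n = int (card B * card A)"
    using n by simp
  ultimately have "bij_betw (\<lambda>(b, a). (int t * g b + int s * f a) mod n) (B \<times> A) {0..<n}"
    using complete_residues_mult_coprime[OF assms(2,1), where f = g and g = "\<lambda>a. int s * f a"]
      \<open>t > 0\<close> \<open>coprime t (card B)\<close> by blast
  then show ?thesis
    by (subst add.commute) (rule bij_betw_swap_product)
qed

lemma diffset_coprimeE:
  assumes "d \<in> diffset A" and "d \<noteq> 0" and "coprime d c"
  obtains a1 a2 where "a1 \<in> A" "a2 \<in> A" "a2 < a1" "coprime (a1 - a2) c"
proof -
  obtain x y where "x \<in> A" "y \<in> A" "d = x - y"
    using assms(1) unfolding diffset_def by blast
  show ?thesis
  proof (cases "y < x")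
    case True
    then show ?thesis
      using that \<open>x \<in> A\<close> \<open>y \<in> A\<close> \<open>d = x - y\<close> assms(3) by blast
  next
    case False
    then have "x < y"
      using \<open>d \<noteq> 0\<close> \<open>d = x - y\<close> by simp
    moreover have "coprime (y - x) c"
      using assms(3) \<open>d = x - y\<close> by (metis coprime_minus_left_iff minus_diff_eq)
    ultimately show ?thesis
      using that \<open>x \<in> A\<close> \<open>y \<in> A\<close> by blast
  qed
qed

theorem lemma3p2:
  fixes A B :: "int set"
  assumes "finite A" and "finite B"
    and "A \<noteq> {0}" and "B \<noteq> {0}"
    and "direct_sum_complete_residues A B (int (card A * card B))"
  shows "(\<forall>d \<in> diffset A. d \<noteq> 0 \<longrightarrow> \<not> coprime d (int (card B))) \<or>
         (\<forall>d \<in> diffset B. d \<noteq> 0 \<longrightarrow> \<not> coprime d (int (card A)))"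
proof (rule ccontr)
  assume "\<not> ?thesis"
  then obtain a1 a2 b1 b2 where
    a: "a1 \<in> A" "a2 \<in> A" "a2 < a1" "coprime (a1 - a2) (int (card B))" and
    b: "b1 \<in> B" "b2 \<in> B" "b2 < b1" "coprime (b1 - b2) (int (card A))"
    by (auto elim!: diffset_coprimeE)
  define n where "n = int (card A * card B)"
  define s t where "s = nat (b1 - b2)" and "t = nat (a1 - a2)"
  have "int s = b1 - b2" "int t = a1 - a2"
    using a b by (simp_all add: s_def t_def)
  then have "s > 0" "coprime s (card A)" "t > 0" "coprime t (card B)"
    using a b by (simp_all flip: coprime_int_iff)
  then have "bij_betw (\<lambda>(a, b). (int s * a + int t * b) mod n) (A \<times> B) {0..<n}"
    using assms(5) complete_residues_mult_coprime_both[OF assms(1,2) n_def, where f = id and g = id]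
    by (simp add: direct_sum_complete_residues_def n_def)
  then have inj: "inj_on (\<lambda>(a, b). ((b1 - b2) * a + (a1 - a2) * b) mod n) (A \<times> B)"
    using \<open>int s = b1 - b2\<close> \<open>int t = a1 - a2\<close> by (simp add: bij_betw_def)
  have "((b1 - b2) * a1 + (a1 - a2) * b2) mod n = ((b1 - b2) * a2 + (a1 - a2) * b1) mod n"
    by (simp add: algebra_simps)
  then have "(a1, b2) = (a2, b1)"
    using inj_onD[OF inj, of "(a1, b2)" "(a2, b1)"] a(1,2) b(1,2) by simp
  then show False
    using \<open>a2 < a1\<close> by simp
qed

end
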